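(* Let $P_0$ be a domain, $U$ a free $P_0$-module of rank four with dual $U^*=\operatorname{Hom}_{P_0}(U,P_0)$, and $x,y,z,w$ a basis of $U$ with dual basis $x^*,y^*,z^*,w^*$. Let $$\phi_3=ax^{*(2)}y^*+dx^*y^{*(2)}+ey^{*(2)}z^*+fy^{*(2)}w^*+gx^*z^{*(2)}+hy^*z^{*(2)}+iz^{*(2)}w^*+ky^*w^{*(2)}+mx^*y^*z^*+nx^*y^*w^*+py^*z^*w^*\in D_3U^*$$ with parameters in $P_0$. Assume (a) $a\neq0$, (b) $g\neq0$, and (c) $\ell\phi_3\neq0$ for all nonzero $\ell\in U$. Then $\Gamma_{\phi_3}$ is not identically zero.
   Context: $D_iU^*=\operatorname{Hom}_{P_0}(\operatorname{Sym}_iU,P_0)$; $D_\bullet U^*$ is the divided power algebra, a module over $\operatorname{Sym}_\bullet U$ via $(uv)(u')=v(uu')$. The divided power monomial $x^{*(a_1)}y^{*(a_2)}z^{*(a_3)}w^{*(a_4)}$ takes value $1$ on $x^{a_1}y^{a_2}z^{a_3}w^{a_4}$ and $0$ on all other monomials of that degree; a factor without parenthesized exponent has exponent one. $D_4U$ is the degree-$4$ divided power of $U$. For $X\in D_4U$, $\Delta(X)\in U^{\otimes4}$ is its comultiplication: for $X=\ell_1^{(e_1)}\cdots\ell_s^{(e_s)}$ with $\sum e_j=4$, the sum of all distinct words $u_1\otimes\cdots\otimes u_4$ in which the symbol $\ell_j$ occurs exactly $e_j$ times, extended linearly. $\Gamma_{\phi_3}:D_4U\otimes\bigwedge^4U\to\bigwedge^4U^*$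 is the $P_0$-linear map $\Gamma_{\phi_3}(X\otimes y_1\wedge\cdots\wedge y_4)=\sum(u_1y_1\phi_3)\wedge\cdots\wedge(u_4y_4\phi_3)$, summed over the terms of $\Delta(X)$. *)

theory Defs
  imports "HOL-Library.FuncSet" "HOL-Combinatorics.Permutations"
begin

text \<open>The basis x,y,z,w of U is indexed by 0,1,2,3.
An element of U is given by its coordinate function (nat \<Rightarrow> 'a; only indices < 4 matter).
A monomial of Sym U is given by its exponent list [a1,a2,a3,a4].
An element of the divided power algebra D U^* is a functional on monomials
(nat list \<Rightarrow> 'a), i.e. its values on the monomial basis of Sym U; the divided power
monomial x^{*(a1)}y^{*(a2)}z^{*(a3)}w^{*(a4)} is the functional that is 1 on the exponent
list [a1,a2,a3,a4] and 0 elsewhere.\<close>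

definition unitv :: "nat \<Rightarrow> nat list" where
  "unitv i = map (\<lambda>j. if j = i then 1 else 0) [0..<4]"

text \<open>Module action of u \<in> U = Sym_1 U on D U^*: (u v)(m) = v(u m).\<close>
definition contract :: "(nat \<Rightarrow> 'a::comm_ring_1) \<Rightarrow> (nat list \<Rightarrow> 'a) \<Rightarrow> (nat list \<Rightarrow> 'a)" where
  "contract l v = (\<lambda>\<alpha>. \<Sum>i<4. l i * v (map2 (+) (unitv i) \<alpha>))"

definition phi3 :: "'a::comm_ring_1 \<Rightarrow> 'a \<Rightarrow> 'a \<Rightarrow> 'a \<Rightarrow> 'a \<Rightarrow> 'a \<Rightarrow> 'a \<Rightarrow> 'a \<Rightarrow> 'a \<Rightarrow> 'a \<Rightarrow> 'a
    \<Rightarrow> nat list \<Rightarrow> 'a" where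
  "phi3 a d e f g h i k m n p = (\<lambda>\<alpha>.
     if \<alpha> = [2,1,0,0] then a else
     if \<alpha> = [1,2,0,0] then d else
     if \<alpha> = [0,2,1,0] then e else
     if \<alpha> = [0,2,0,1] then f else
     if \<alpha> = [1,0,2,0] then g else
     if \<alpha> = [0,1,2,0] then h else
     if \<alpha> = [0,0,2,1] then i else
     if \<alpha> = [0,1,0,2] then k else
     if \<alpha> = [1,1,1,0] then m else
     if \<alpha> = [1,1,0,1] then n else
     if \<alpha> = [0,1,1,1] then p else 0)"

text \<open>Coefficient of v_0 \<and> v_1 \<and> v_2 \<and> v_3 \<in> \<And>^4 U^* with respect to
x^* \<and> y^* \<and> z^* \<and> w^*, where M t j is the j-th coordinate of the covector v_t.\<close>
definition wedge4 :: "(nat \<Rightarrow> nat \<Rightarrow> 'a::comm_ring_1) \<Rightarrow> 'a" where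
  "wedge4 M = (\<Sum>q \<in> {q. q permutes {0..<4}}. of_int (sign q) * (\<Prod>t<4. M t (q t)))"

text \<open>A product of divided powers l_1^{(e_1)} ... l_s^{(e_s)} is a list L of pairs (l_j, e_j).
The words of Delta(X): maps from positions {0..3} to symbols {0..s-1}, symbol j used e_j times.\<close>
definition words :: "((nat \<Rightarrow> 'a) \<times> nat) list \<Rightarrow> (nat \<Rightarrow> nat) set" where
  "words L = {w \<in> {0..<4} \<rightarrow>\<^sub>E {0..<length L}.
      \<forall>j<length L. card {t \<in> {0..<4}. w t = j} = snd (L ! j)}"

text \<open>Gamma_{phi} on X \<otimes> y_0 \<and> ... \<and> y_3 with X = product of divided powers L.\<close>
definition Gamma_term :: "(nat list \<Rightarrow> 'a::comm_ring_1) \<Rightarrow> ((nat \<Rightarrow> 'a) \<times> nat) list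
    \<Rightarrow> (nat \<Rightarrow> nat \<Rightarrow> 'a) \<Rightarrow> 'a" where
  "Gamma_term \<phi> L ys = (\<Sum>w \<in> words L.
      wedge4 (\<lambda>t j. contract (fst (L ! (w t))) (contract (ys t) \<phi>) (unitv j)))"

text \<open>Gamma_{phi} extended linearly to a general element of D_4 U \<otimes> \<And>^4 U, given as a
finite sum of terms c \<cdot> X \<otimes> y_0 \<and> ... \<and> y_3.\<close>
definition Gamma :: "(nat list \<Rightarrow> 'a::comm_ring_1)
    \<Rightarrow> ('a \<times> ((nat \<Rightarrow> 'a) \<times> nat) list \<times> (nat \<Rightarrow> nat \<Rightarrow> 'a)) list \<Rightarrow> 'a" where
  "Gamma \<phi> T = sum_list (map (\<lambda>(c, L, ys). c * Gamma_term \<phi> L ys) T)"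

end

theory Submission
  imports Defs
begin

(* If Gamma_phi3 vanished, evaluating it on x^(2) z^(2), z^(2) w^(2), z^(4) and x y^(3), each
   tensored with x \<and> y \<and> z \<and> w, would give (a i - g n)^2 = (i n - g k)^2 = (i m - g p)^2 = 0
   and, since a g \<noteq> 0, also g f = d i. These four relations imply that the nonzero vector
   g w - i x annihilates phi3, contradicting (c). *)

lemma sum_permutes_insert_sign:
  fixes G :: "(nat \<Rightarrow> nat) \<Rightarrow> 'a::comm_ring_1"
  assumes "finite S" and "a \<notin> S"
  shows "(\<Sum>q\<in>{q. q permutes insert a S}. of_int (sign q) * G q) =
    (\<Sum>b\<in>insert a S. \<Sum>q\<in>{q. q permutes S}.
       (if a = b then 1 else -1) * (of_int (sign q) * G (transpose a b \<circ> q)))"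
proof -
  have "(\<Sum>q\<in>{q. q permutes insert a S}. of_int (sign q) * G q) =
    (\<Sum>b\<in>insert a S. \<Sum>q\<in>{q. q permutes S}.
       of_int (sign (transpose a b \<circ> q)) * G (transpose a b \<circ> q))"
    by (rule sum_over_permutations_insert[OF assms])
  also have "\<dots> = (\<Sum>b\<in>insert a S. \<Sum>q\<in>{q. q permutes S}.
       (if a = b then 1 else -1) * (of_int (sign q) * G (transpose a b \<circ> q)))"
  proof (intro sum.cong refl)
    fix b q assume "q \<in> {q. q permutes S}"
    then have "permutation q" using assms(1) permutation_permutes by blast
    then have "sign (transpose a b \<circ> q) = (if a = b then 1 else -1) * sign q"
      by (simp add: sign_compose permutation_swap_id sign_swap_id)
    then show "of_int (sign (transpose a b \<circ> q)) * G (transpose a b \<circ> q) =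
      (if a = b then 1 else -1) * (of_int (sign q) * G (transpose a b \<circ> q))" by simp
  qed
  finally show ?thesis .
qed

lemma wedge4_expand:
  "wedge4 M =
     M 0 0 * M 1 1 * M 2 2 * M 3 3 - M 0 0 * M 1 1 * M 2 3 * M 3 2
   - M 0 0 * M 1 2 * M 2 1 * M 3 3 + M 0 0 * M 1 2 * M 2 3 * M 3 1
   + M 0 0 * M 1 3 * M 2 1 * M 3 2 - M 0 0 * M 1 3 * M 2 2 * M 3 1
   - M 0 1 * M 1 0 * M 2 2 * M 3 3 + M 0 1 * M 1 0 * M 2 3 * M 3 2
   + M 0 1 * M 1 2 * M 2 0 * M 3 3 - M 0 1 * M 1 2 * M 2 3 * M 3 0
   - M 0 1 * M 1 3 * M 2 0 * M 3 2 + M 0 1 * M 1 3 * M 2 2 * M 3 0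
   + M 0 2 * M 1 0 * M 2 1 * M 3 3 - M 0 2 * M 1 0 * M 2 3 * M 3 1
   - M 0 2 * M 1 1 * M 2 0 * M 3 3 + M 0 2 * M 1 1 * M 2 3 * M 3 0
   + M 0 2 * M 1 3 * M 2 0 * M 3 1 - M 0 2 * M 1 3 * M 2 1 * M 3 0
   - M 0 3 * M 1 0 * M 2 1 * M 3 2 + M 0 3 * M 1 0 * M 2 2 * M 3 1
   + M 0 3 * M 1 1 * M 2 0 * M 3 2 - M 0 3 * M 1 1 * M 2 2 * M 3 0
   - M 0 3 * M 1 2 * M 2 0 * M 3 1 + M 0 3 * M 1 2 * M 2 1 * M 3 0"
proof -
  have four: "{0..<4::nat} = insert 0 (insert 1 (insert 2 (insert 3 {})))" by auto
  have "{q. q permutes ({}::nat set)} = {id}" by (auto simp: permutes_empty)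
  then show ?thesis
    unfolding wedge4_def four
    by (simp add: sum_permutes_insert_sign lessThan_nat_numeral transpose_def algebra_simps)
qed

lemma wedge4_cong:
  assumes "\<And>t. t < 4 \<Longrightarrow> M t = M' t"
  shows "wedge4 M = wedge4 M'"
  unfolding wedge4_def using assms by simp

definition word_of_list :: "nat list \<Rightarrow> nat \<Rightarrow> nat" where
  "word_of_list xs = restrict ((!) xs) {0..<4}"

definition word_lists :: "nat list \<Rightarrow> nat list set" where
  "word_lists es = set [xs \<leftarrow> List.n_lists 4 [0..<length es]. map (count_list xs) [0..<length es] = es]"

lemma card_word_of_list:
  assumes "length xs = 4"
  shows "card {t \<in> {0..<4}. word_of_list xs t = j} = count_list xs j"
proof -
  have "{t \<in> {0..<4}. word_of_list xs t = j} = {t. t < length xs \<and> j = xs ! t}"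
    using assms by (auto simp: word_of_list_def)
  then show ?thesis by (simp add: count_list_eq_length_filter length_filter_conv_card)
qed

lemma words_eq_image_word_lists: "words L = word_of_list ` word_lists (map snd L)"
proof (intro equalityI subsetI)
  fix w assume "w \<in> words L"
  then have w: "w \<in> {0..<4} \<rightarrow>\<^sub>E {0..<length L}"
    and counts: "\<forall>j<length L. card {t \<in> {0..<4}. w t = j} = snd (L ! j)"
    by (simp_all add: words_def)
  define xs where "xs = map w [0..<4]"
  have w_eq: "w = word_of_list xs"
  proof (rule ext)
    fix t show "w t = word_of_list xs t"
      using PiE_arb[OF w, of t] by (cases "t < 4") (simp_all add: word_of_list_def xs_def)
  qed
  have "length xs = 4" by (simp add: xs_def)
  moreover have "set xs \<subseteq> {0..<length L}"
    using w by (auto simp: xs_def PiE_iff)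
  moreover have "map (count_list xs) [0..<length L] = map snd L"
  proof (rule nth_equalityI)
    fix j assume "j < length (map (count_list xs) [0..<length L])"
    then show "map (count_list xs) [0..<length L] ! j = map snd L ! j"
      using counts card_word_of_list[OF \<open>length xs = 4\<close>, of j] by (simp add: w_eq)
  qed simp
  ultimately have "xs \<in> word_lists (map snd L)" by (simp add: word_lists_def set_n_lists)
  with w_eq show "w \<in> word_of_list ` word_lists (map snd L)" by (rule image_eqI)
next
  fix w assume "w \<in> word_of_list ` word_lists (map snd L)"
  then obtain xs where xs: "xs \<in> word_lists (map snd L)" and w_eq: "w = word_of_list xs"
    by blast
  then have len: "length xs = 4" and set_xs: "set xs \<subseteq> {0..<length L}"
    and counts: "map (count_list xs) [0..<length L] = map snd L"
    by (simp_all add: word_lists_def set_n_lists)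
  have "xs ! t < length L" if "t < 4" for t
    using subsetD[OF set_xs, of "xs ! t"] that len by simp
  then have "w \<in> {0..<4} \<rightarrow>\<^sub>E {0..<length L}"
    by (simp add: w_eq word_of_list_def restrict_PiE_iff)
  moreover have "card {t \<in> {0..<4}. w t = j} = snd (L ! j)" if "j < length L" for j
    using arg_cong[OF counts, of "\<lambda>ys. ys ! j"] that card_word_of_list[OF len, of j]
    by (simp add: w_eq)
  ultimately show "w \<in> words L" by (simp add: words_def)
qed

lemma inj_on_word_of_list: "inj_on word_of_list {xs. length xs = 4}"
proof (rule inj_onI)
  fix xs ys assume "xs \<in> {xs. length xs = 4}" "ys \<in> {xs. length xs = 4}"
    and eq: "word_of_list xs = word_of_list ys"
  moreover have "xs ! t = ys ! t" if "t < 4" for t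
    using fun_cong[OF eq, of t] that by (simp add: word_of_list_def)
  ultimately show "xs = ys" by (simp add: nth_equalityI)
qed

lemma Gamma_term_eq_sum_word_lists:
  "Gamma_term \<phi> L ys = (\<Sum>xs \<in> word_lists (map snd L).
      wedge4 (\<lambda>t j. contract (fst (L ! (xs ! t))) (contract (ys t) \<phi>) (unitv j)))"
proof -
  have inj: "inj_on word_of_list (word_lists (map snd L))"
    by (rule inj_on_subset[OF inj_on_word_of_list]) (auto simp: word_lists_def set_n_lists)
  then show ?thesis
    unfolding Gamma_term_def words_eq_image_word_lists sum.reindex[OF inj] o_def
    by (intro sum.cong refl wedge4_cong) (simp add: word_of_list_def)
qed

definition basis_vec :: "nat \<Rightarrow> nat \<Rightarrow> 'a::comm_ring_1" where
  "basis_vec r j = (if j = r then 1 else 0)"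

lemma contract_basis_vec:
  assumes "r < 4"
  shows "contract (basis_vec r) v \<alpha> = v (map2 (+) (unitv r) \<alpha>)"
proof -
  have "contract (basis_vec r) v \<alpha> = (\<Sum>i<4. if i = r then v (map2 (+) (unitv i) \<alpha>) else 0)"
    unfolding contract_def basis_vec_def by (intro sum.cong) simp_all
  with assms show ?thesis by simp
qed

lemma unitv_eq: "unitv j = map (\<lambda>k. of_bool (k = j)) [0,1,2,3]"
  by (simp add: unitv_def upt_rec)

lemma contract_basis_vec_unitv:
  assumes "r < 4" and "t < 4"
  shows "contract (basis_vec r) (contract (basis_vec t) \<phi>) (unitv j) =
    \<phi> (map (\<lambda>k. of_bool (k = t) + of_bool (k = r) + of_bool (k = j)) [0,1,2,3])"
  using assms by (simp add: contract_basis_vec unitv_eq add.assoc)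

lemma Gamma_term_phi3_x2_z2:
  "Gamma_term (phi3 a d e f g h i k m n p) [(basis_vec 0, 2), (basis_vec 2, 2)] basis_vec
    = (a*i - g*n)^2"
  unfolding Gamma_term_eq_sum_word_lists word_lists_def
  by (simp add: eval_nat_numeral upt_rec wedge4_expand contract_basis_vec_unitv phi3_def
      power2_eq_square algebra_simps)

lemma Gamma_term_phi3_z2_w2:
  "Gamma_term (phi3 a d e f g h i k m n p) [(basis_vec 2, 2), (basis_vec 3, 2)] basis_vec
    = (i*n - g*k)^2"
  unfolding Gamma_term_eq_sum_word_lists word_lists_def
  by (simp add: eval_nat_numeral upt_rec wedge4_expand contract_basis_vec_unitv phi3_def
      power2_eq_square algebra_simps)

lemma Gamma_term_phi3_z4:
  "Gamma_term (phi3 a d e f g h i k m n p) [(basis_vec 2, 4)] basis_vec = (i*m - g*p)^2"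
  unfolding Gamma_term_eq_sum_word_lists word_lists_def
  by (simp add: eval_nat_numeral upt_rec wedge4_expand contract_basis_vec_unitv phi3_def
      power2_eq_square algebra_simps)

lemma Gamma_term_phi3_x_y3:
  fixes a d e f g h i k m n p :: "'a::comm_ring_1"
  assumes "g*n = a*i" and "g*k = i*n" and "g*p = i*m"
  shows "g^2 * Gamma_term (phi3 a d e f g h i k m n p) [(basis_vec 0, 1), (basis_vec 1, 3)] basis_vec
    = - (a*g*(g*f - d*i)^2)"
proof -
  have Gamma: "Gamma_term (phi3 a d e f g h i k m n p) [(basis_vec 0, 1), (basis_vec 1, 3)] basis_vec
    = - a*d*h*k + a*d*p^2 - a*f^2*g - d^2*g*k + d*k*m^2 - 2*d*m*n*p + d*h*n^2 + 2*d*f*g*n"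
    unfolding Gamma_term_eq_sum_word_lists word_lists_def
    by (simp add: eval_nat_numeral upt_rec wedge4_expand contract_basis_vec_unitv phi3_def
        power2_eq_square algebra_simps)
  have "g^2 * (- a*d*h*k + a*d*p^2 - a*f^2*g - d^2*g*k + d*k*m^2 - 2*d*m*n*p + d*h*n^2 + 2*d*f*g*n)
      + a*g*(g*f - d*i)^2
    = (g*n - a*i) * (d*h*(g*n + a*i) - a*d*h*i - d^2*g*i + d*m^2*i - 2*d*m*g*p + 2*d*f*g^2)
      + (g*k - i*n) * (d*m^2*g - a*d*h*g - d^2*g^2)
      + (g*p - i*m) * (a*d*(g*p + i*m) - 2*a*d*i*m)"
    by (simp add: algebra_simps power2_eq_square)
  with Gamma assms show ?thesis by (simp add: eq_neg_iff_add_eq_0)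
qed

lemma mem_n_lists_of_sum_list:
  fixes \<alpha> :: "nat list"
  assumes "length \<alpha> = n" and "sum_list \<alpha> = s"
  shows "\<alpha> \<in> set [\<beta> \<leftarrow> List.n_lists n [0..<Suc s]. sum_list \<beta> = s]"
proof -
  have "set \<alpha> \<subseteq> {0..<Suc s}"
    using member_le_sum_list[of _ \<alpha>] assms(2) by fastforce
  with assms show ?thesis by (simp add: set_n_lists del: upt_Suc)
qed

lemma contract_phi3_degenerate:
  fixes a d e f g h i k m n p :: "'a::comm_ring_1"
  assumes "g*n = a*i" and "g*k = i*n" and "g*p = i*m" and "g*f = d*i"
    and "length \<alpha> = 4" and "sum_list \<alpha> = 2"
  shows "contract (\<lambda>j. g * basis_vec 3 j - i * basis_vec 0 j) (phi3 a d e f g h i k m n p) \<alpha> = 0"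
proof -
  have "\<forall>\<beta> \<in> set [\<beta> \<leftarrow> List.n_lists 4 [0..<Suc 2]. sum_list \<beta> = 2].
      contract (\<lambda>j. g * basis_vec 3 j - i * basis_vec 0 j) (phi3 a d e f g h i k m n p) \<beta> = 0"
    using assms(1-4)
    by (simp add: eval_nat_numeral upt_rec contract_def basis_vec_def unitv_eq phi3_def
        algebra_simps)
  with mem_n_lists_of_sum_list[OF assms(5,6)] show ?thesis by blast
qed

theorem proposition6p3:
  fixes a d e f g h i k m n p :: "'a::idom"
  assumes "a \<noteq> 0"
    and "g \<noteq> 0"
    and "\<forall>l :: nat \<Rightarrow> 'a. (\<exists>j<4. l j \<noteq> 0) \<longrightarrow>
           (\<exists>\<alpha>. length \<alpha> = 4 \<and> sum_list \<alpha> = 2 \<and>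
                contract l (phi3 a d e f g h i k m n p) \<alpha> \<noteq> 0)"
  shows "\<exists>T. (\<forall>(c, L, ys) \<in> set T. sum_list (map snd L) = 4) \<and>
             Gamma (phi3 a d e f g h i k m n p) T \<noteq> 0"
proof (rule ccontr)
  let ?\<phi> = "phi3 a d e f g h i k m n p"
  assume no_witness: "\<not> ?thesis"
  have vanish: "Gamma_term ?\<phi> L basis_vec = 0" if "sum_list (map snd L) = 4" for L
    using no_witness that by (auto simp: Gamma_def dest: spec[of _ "[(1, L, basis_vec)]"])
  have rel1: "g*n = a*i"
    using vanish[of "[(basis_vec 0, 2), (basis_vec 2, 2)]"] by (simp add: Gamma_term_phi3_x2_z2)
  have rel2: "g*k = i*n"
    using vanish[of "[(basis_vec 2, 2), (basis_vec 3, 2)]"] by (simp add: Gamma_term_phi3_z2_w2)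
  have rel3: "g*p = i*m"
    using vanish[of "[(basis_vec 2, 4)]"] by (simp add: Gamma_term_phi3_z4)
  have "a*g*(g*f - d*i)^2 = 0"
    using Gamma_term_phi3_x_y3[where d = d and e = e and f = f and h = h, OF rel1 rel2 rel3] vanish[of "[(basis_vec 0, 1), (basis_vec 1, 3)]"]
    by simp
  then have rel4: "g*f = d*i" using assms(1,2) by simp
  let ?l = "\<lambda>j. g * basis_vec 3 j - i * basis_vec 0 j"
  have "\<exists>j<4. ?l j \<noteq> 0"
    using assms(2) by (intro exI[of _ 3]) (simp add: basis_vec_def)
  then obtain \<alpha> where "length \<alpha> = 4" "sum_list \<alpha> = 2" "contract ?l ?\<phi> \<alpha> \<noteq> 0"
    using assms(3)[rule_format, of ?l] by blast
  with contract_phi3_degenerate[OF rel1 rel2 rel3 rel4] show False by blast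
qed

end
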